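(* Let $\mathcal A_V$ be the algebra of Laurent polynomials in $a_V,b_V,c_V,d_V$ with the log-canonical Poisson bracket $\{a_V,b_V\}=a_Vb_V$, $\{a_V,c_V\}=0$, $\{a_V,d_V\}=-\tfrac12 a_Vd_V$, $\{b_V,c_V\}=0$, $\{b_V,d_V\}=-\tfrac12 b_Vd_V$, $\{c_V,d_V\}=-\tfrac12 c_Vd_V$. Let $\mathcal A_{IV}$ be the algebra of Laurent polynomials in $a,b,c,d,e,f,h$ with the log-canonical bracket $\{a,b\}=0,\ \{a,c\}=-\tfrac12 ac,\ \{a,d\}=-\tfrac12 ad,\ \{a,e\}=0,\ \{a,f\}=\tfrac12 af,\ \{a,h\}=\tfrac12 ah,$ $\{b,c\}=\tfrac14 bc,\ \{b,d\}=0,\ \{b,e\}=\tfrac14 be,\ \{b,f\}=\tfrac14 bf,\ \{b,h\}=-\tfrac14 bh,$ $\{c,d\}=-\tfrac14 cd,\ \{c,e\}=\tfrac14 ce,\ \{c,f\}=0,\ \{c,h\}=\tfrac14 ch,$ $\{d,e\}=-\tfrac14 de,\ \{d,f\}=\tfrac14 df,\ \{d,h\}=\tfrac14 dh,$ $\{e,f\}=-\tfrac14 ef,\ \{e,h\}=0,\ \{f,h\}=\tfrac14 fh$. Then the assignment $a_V\mapsto ab^2$, $b_V\mapsto bf$, $c_V\mapsto bc$, $d_V\mapsto bd$ defines an injective Poisson homomorphism $\mathcal A_V\to\mathcal A_{IV}$, so that $\mathcal A_V$ is realised as the Poisson subalgebra of $\mathcal A_{IV}$ of functions of $ab^2,bf,bc,bd$;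 moreover $h$ Poisson commutes with this subalgebra.
   Context: A log-canonical bracket is extended from the generators to all Laurent polynomials by bilinearity, antisymmetry and the Leibniz rule. *)

theory Defs
  imports "HOL-Library.Poly_Mapping"
begin

text \<open>Laurent polynomials in finitely many variables of type 'v with coefficients in 'k:
  finitely supported maps from exponent vectors (finitely supported 'v => int) to 'k,
  with convolution product (ring structure from Poly_Mapping).\<close>
type_synonym ('v, 'k) laurent = "('v \<Rightarrow>\<^sub>0 int) \<Rightarrow>\<^sub>0 'k"

definition gen :: "'v \<Rightarrow> ('v, 'k::{zero,one}) laurent" where
  "gen x = Poly_Mapping.single (Poly_Mapping.single x 1) 1"

definition const :: "'k::zero \<Rightarrow> ('v, 'k) laurent" where
  "const c = Poly_Mapping.single 0 c"

text \<open>Log-canonical bracket with matrix omega: on monomials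
  {x^alpha, x^beta} = (sum_{i,j} alpha_i beta_j omega_ij) x^(alpha+beta),
  extended by bilinearity (this is the unique extension satisfying bilinearity,
  antisymmetry and the Leibniz rule from the generator values {x_i,x_j} = omega_ij x_i x_j).\<close>
definition lc_bracket ::
  "('v::finite \<Rightarrow> 'v \<Rightarrow> 'k::comm_ring_1) \<Rightarrow> ('v, 'k) laurent \<Rightarrow> ('v, 'k) laurent \<Rightarrow> ('v, 'k) laurent" where
  "lc_bracket w P Q =
     (\<Sum>al\<in>Poly_Mapping.keys P. \<Sum>be\<in>Poly_Mapping.keys Q.
        Poly_Mapping.single (al + be)
          (Poly_Mapping.lookup P al * Poly_Mapping.lookup Q be *
           (\<Sum>p\<in>(UNIV::'v set). \<Sum>q\<in>(UNIV::'v set). of_int (Poly_Mapping.lookup al p) * of_int (Poly_Mapping.lookup be q) * w p q)))"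

definition alg_hom :: "(('v, 'k::comm_ring_1) laurent \<Rightarrow> ('w, 'k) laurent) \<Rightarrow> bool" where
  "alg_hom \<phi> \<longleftrightarrow> \<phi> 1 = 1 \<and> (\<forall>P Q. \<phi> (P + Q) = \<phi> P + \<phi> Q) \<and> (\<forall>P Q. \<phi> (P * Q) = \<phi> P * \<phi> Q)
     \<and> (\<forall>c P. \<phi> (const c * P) = const c * \<phi> P)"

datatype varV = aV | bV | cV | dV

lemma UNIV_varV: "(UNIV :: varV set) = {aV, bV, cV, dV}"
  by (auto intro: varV.exhaust)

instance varV :: finite
  by standard (simp add: UNIV_varV)

datatype varIV = a | b | c | d | e | f | h

lemma UNIV_varIV: "(UNIV :: varIV set) = {a, b, c, d, e, f, h}"
  by (auto intro: varIV.exhaust)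

instance varIV :: finite
  by standard (simp add: UNIV_varIV)

fun idxV :: "varV \<Rightarrow> nat" where
  "idxV aV = 0" | "idxV bV = 1" | "idxV cV = 2" | "idxV dV = 3"

fun upV :: "varV \<Rightarrow> varV \<Rightarrow> 'k::field" where
  "upV aV bV = 1"
| "upV aV cV = 0"
| "upV aV dV = - 1/2"
| "upV bV cV = 0"
| "upV bV dV = - 1/2"
| "upV cV dV = - 1/2"
| "upV _ _ = 0"

definition omegaV :: "varV \<Rightarrow> varV \<Rightarrow> 'k::field" where
  "omegaV x y = (if idxV x < idxV y then upV x y else if idxV y < idxV x then - upV y x else 0)"

fun idxIV :: "varIV \<Rightarrow> nat" where
  "idxIV a = 0" | "idxIV b = 1" | "idxIV c = 2" | "idxIV d = 3"
| "idxIV e = 4" | "idxIV f = 5" | "idxIV h = 6"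

fun upIV :: "varIV \<Rightarrow> varIV \<Rightarrow> 'k::field" where
  "upIV a b = 0" | "upIV a c = - 1/2" | "upIV a d = - 1/2" | "upIV a e = 0"
| "upIV a f = 1/2" | "upIV a h = 1/2"
| "upIV b c = 1/4" | "upIV b d = 0" | "upIV b e = 1/4" | "upIV b f = 1/4" | "upIV b h = - 1/4"
| "upIV c d = - 1/4" | "upIV c e = 1/4" | "upIV c f = 0" | "upIV c h = 1/4"
| "upIV d e = - 1/4" | "upIV d f = 1/4" | "upIV d h = 1/4"
| "upIV e f = - 1/4" | "upIV e h = 0"
| "upIV f h = 1/4"
| "upIV _ _ = 0"

definition omegaIV :: "varIV \<Rightarrow> varIV \<Rightarrow> 'k::field" where
  "omegaIV x y = (if idxIV x < idxIV y then upIV x y else if idxIV y < idxIV x then - upIV y x else 0)"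

fun imgV :: "varV \<Rightarrow> (varIV, 'k::comm_ring_1) laurent" where
  "imgV aV = gen a * gen b ^ 2"
| "imgV bV = gen b * gen f"
| "imgV cV = gen b * gen c"
| "imgV dV = gen b * gen d"

end

theory Submission
  imports Defs
begin

text \<open>
  The assignment is the monomial substitution \<open>x^\<alpha> \<mapsto> x^(E \<alpha>)\<close>, where the integer matrix \<open>E\<close>
  lists the exponent vectors of \<open>ab^2, bf, bc, bd\<close>; an algebra homomorphism between Laurent
  polynomial rings is determined by the images of the generators, so it is this map. It is
  injective because the \<open>a, f, c, d\<close> coordinates of \<open>E \<alpha>\<close> recover \<open>\<alpha>\<close>. A log-canonical
  bracket reads \<open>{x^\<alpha>, x^\<beta>} = (\<alpha>\<^sup>T \<Omega> \<beta>) x^(\<alpha> + \<beta>)\<close>, so a monomial map is Poisson as soon as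
  \<open>E\<^sup>T \<Omega>\<^sub>I\<^sub>V E = \<Omega>\<^sub>V\<close>, a finite check on generators; likewise \<open>h\<close> commutes with the image
  because the row \<open>e\<^sub>h\<^sup>T \<Omega>\<^sub>I\<^sub>V E\<close> vanishes.
\<close>

lemma lookup_frag_extend:
  assumes "finite S" "Poly_Mapping.keys al \<subseteq> S"
  shows "Poly_Mapping.lookup (frag_extend E al) q = (\<Sum>p\<in>S. Poly_Mapping.lookup al p * Poly_Mapping.lookup (E p) q)"
  unfolding frag_extend_def lookup_sum lookup_frag_cmul
  by (rule sum.mono_neutral_left) (use assms in \<open>auto simp: in_keys_iff\<close>)

text \<open>\<open>frag_extend E\<close> is the \<open>\<int>\<close>-linear extension of \<open>E\<close> to exponent vectors.\<close>
definition laurent_map :: "('v \<Rightarrow> 'w \<Rightarrow>\<^sub>0 int) \<Rightarrow> ('v, 'k::comm_monoid_add) laurent \<Rightarrow> ('w, 'k) laurent" where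
  "laurent_map E P = (\<Sum>al\<in>Poly_Mapping.keys P. Poly_Mapping.single (frag_extend E al) (Poly_Mapping.lookup P al))"

lemma poly_mapping_expansion: "P = (\<Sum>al\<in>Poly_Mapping.keys P. Poly_Mapping.single al (Poly_Mapping.lookup P al))"
  by (rule poly_mapping_eqI) (auto simp: lookup_sum lookup_single when_def in_keys_iff)

lemma laurent_map_eq_sum_superset:
  assumes "finite S" "Poly_Mapping.keys P \<subseteq> S"
  shows "laurent_map E P = (\<Sum>al\<in>S. Poly_Mapping.single (frag_extend E al) (Poly_Mapping.lookup P al))"
  unfolding laurent_map_def
  by (rule sum.mono_neutral_left) (use assms in \<open>auto simp: in_keys_iff\<close>)

lemma laurent_map_add: "laurent_map E (P + Q) = laurent_map E P + laurent_map E Q"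
proof -
  let ?S = "Poly_Mapping.keys P \<union> Poly_Mapping.keys Q"
  have "laurent_map E (P + Q) = (\<Sum>al\<in>?S. Poly_Mapping.single (frag_extend E al) (Poly_Mapping.lookup (P + Q) al))"
    by (rule laurent_map_eq_sum_superset) (auto dest: keys_add[THEN subsetD])
  also have "\<dots> = (\<Sum>al\<in>?S. Poly_Mapping.single (frag_extend E al) (Poly_Mapping.lookup P al))
     + (\<Sum>al\<in>?S. Poly_Mapping.single (frag_extend E al) (Poly_Mapping.lookup Q al))"
    by (simp add: lookup_add single_add sum.distrib)
  also have "\<dots> = laurent_map E P + laurent_map E Q"
    by (simp add: laurent_map_eq_sum_superset[symmetric])
  finally show ?thesis .
qed

lemma laurent_map_single [simp]:
  "laurent_map E (Poly_Mapping.single al x) = Poly_Mapping.single (frag_extend E al) x"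
  by (simp add: laurent_map_def)

lemma laurent_map_zero [simp]: "laurent_map E 0 = 0"
  by (simp add: laurent_map_def)

lemma laurent_map_sum: "laurent_map E (sum F A) = (\<Sum>x\<in>A. laurent_map E (F x))"
  by (induction A rule: infinite_finite_induct) (simp_all add: laurent_map_add)

lemma laurent_map_mult:
  fixes P Q :: "('v, 'k::comm_semiring_1) laurent"
  shows "laurent_map E (P * Q) = laurent_map E P * laurent_map E Q"
proof -
  have "P * Q = (\<Sum>al\<in>Poly_Mapping.keys P. \<Sum>be\<in>Poly_Mapping.keys Q. Poly_Mapping.single (al + be) (Poly_Mapping.lookup P al * Poly_Mapping.lookup Q be))"
    by (subst poly_mapping_expansion[of P], subst poly_mapping_expansion[of Q])
       (simp add: sum_product mult_single)
  then have "laurent_map E (P * Q) = (\<Sum>al\<in>Poly_Mapping.keys P. \<Sum>be\<in>Poly_Mapping.keys Q.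
      Poly_Mapping.single (frag_extend E al + frag_extend E be) (Poly_Mapping.lookup P al * Poly_Mapping.lookup Q be))"
    by (simp add: laurent_map_sum frag_extend_add)
  also have "\<dots> = laurent_map E P * laurent_map E Q"
    by (simp add: laurent_map_def sum_product mult_single)
  finally show ?thesis .
qed

lemma laurent_map_one: "laurent_map E 1 = 1"
  by (metis frag_extend_0 laurent_map_single single_one)

lemma laurent_map_const [simp]: "laurent_map E (const x) = const x"
  by (simp add: const_def)

lemma alg_hom_laurent_map: "alg_hom (laurent_map E)"
  by (simp add: alg_hom_def laurent_map_one laurent_map_add laurent_map_mult)

lemma laurent_map_gen: "laurent_map E (gen x) = Poly_Mapping.single (E x) 1"
  by (simp add: gen_def)

lemma lookup_laurent_map_frag_extend:
  assumes "inj (frag_extend E)"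
  shows "Poly_Mapping.lookup (laurent_map E P) (frag_extend E al) = Poly_Mapping.lookup P al"
proof -
  have "Poly_Mapping.lookup (laurent_map E P) (frag_extend E al) =
     (\<Sum>be\<in>Poly_Mapping.keys P. (Poly_Mapping.lookup P be when be = al))"
    unfolding laurent_map_def lookup_sum lookup_single
    using assms[THEN injD] by (intro sum.cong) (auto simp: when_def)
  also have "\<dots> = Poly_Mapping.lookup P al"
    by (auto simp: when_def in_keys_iff)
  finally show ?thesis .
qed

lemma inj_laurent_map:
  assumes "inj (frag_extend E)"
  shows "inj (laurent_map E)"
  by (rule injI) (metis assms lookup_laurent_map_frag_extend poly_mapping_eqI)

lemma keys_laurent_map: "Poly_Mapping.keys (laurent_map E P) \<subseteq> frag_extend E ` Poly_Mapping.keys P"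
  unfolding laurent_map_def by (rule order_trans[OF keys_sum]) (auto split: if_splits)

definition lc_form :: "('v::finite \<Rightarrow> 'v \<Rightarrow> 'k::comm_ring_1) \<Rightarrow> ('v \<Rightarrow>\<^sub>0 int) \<Rightarrow> ('v \<Rightarrow>\<^sub>0 int) \<Rightarrow> 'k" where
  "lc_form w al be = (\<Sum>p\<in>UNIV. \<Sum>q\<in>UNIV. of_int (Poly_Mapping.lookup al p) * of_int (Poly_Mapping.lookup be q) * w p q)"

lemma lc_form_frag_extend_right:
  fixes E :: "'u::finite \<Rightarrow> 'v::finite \<Rightarrow>\<^sub>0 int"
  shows "lc_form w al (frag_extend E be) = (\<Sum>u\<in>UNIV. of_int (Poly_Mapping.lookup be u) * lc_form w al (E u))"
  unfolding lc_form_def lookup_frag_extend[OF finite subset_UNIV]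
  by (simp add: of_int_sum sum_distrib_left sum_distrib_right algebra_simps sum.swap[of _ "UNIV::'u set"])

lemma lc_form_frag_extend_left:
  fixes E :: "'u::finite \<Rightarrow> 'v::finite \<Rightarrow>\<^sub>0 int"
  shows "lc_form w (frag_extend E al) be = (\<Sum>u\<in>UNIV. of_int (Poly_Mapping.lookup al u) * lc_form w (E u) be)"
  unfolding lc_form_def lookup_frag_extend[OF finite subset_UNIV]
  by (simp add: of_int_sum sum_distrib_left sum_distrib_right algebra_simps sum.swap[of _ "UNIV::'u set"])

lemma lc_form_frag_extend:
  fixes E :: "'u::finite \<Rightarrow> 'v::finite \<Rightarrow>\<^sub>0 int"
  shows "lc_form w (frag_extend E al) (frag_extend E be) = lc_form (\<lambda>p q. lc_form w (E p) (E q)) al be"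
proof -
  have "lc_form w (frag_extend E al) (frag_extend E be)
      = (\<Sum>u\<in>UNIV. of_int (Poly_Mapping.lookup al u) * lc_form w (E u) (frag_extend E be))"
    by (rule lc_form_frag_extend_left)
  also have "\<dots> = lc_form (\<lambda>p q. lc_form w (E p) (E q)) al be"
    by (simp add: lc_form_frag_extend_right lc_form_def[of _ al be] sum_distrib_left mult.assoc)
  finally show ?thesis .
qed

lemma lc_bracket_eq_sum_superset:
  assumes "finite S" "Poly_Mapping.keys P \<subseteq> S" "finite T" "Poly_Mapping.keys Q \<subseteq> T"
  shows "lc_bracket w P Q = (\<Sum>al\<in>S. \<Sum>be\<in>T. Poly_Mapping.single (al + be)
           (Poly_Mapping.lookup P al * Poly_Mapping.lookup Q be * lc_form w al be))" (is "_ = ?R")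
proof -
  have "lc_bracket w P Q = (\<Sum>al\<in>Poly_Mapping.keys P. \<Sum>be\<in>T. Poly_Mapping.single (al + be)
           (Poly_Mapping.lookup P al * Poly_Mapping.lookup Q be * lc_form w al be))"
    unfolding lc_bracket_def lc_form_def
    by (intro sum.cong refl sum.mono_neutral_left) (use assms in \<open>auto simp: in_keys_iff\<close>)
  also have "\<dots> = ?R"
    by (intro sum.mono_neutral_left) (use assms in \<open>auto simp: in_keys_iff\<close>)
  finally show ?thesis .
qed

lemma laurent_map_lc_bracket:
  fixes E :: "'v::finite \<Rightarrow> 'w::finite \<Rightarrow>\<^sub>0 int" and P Q :: "('v, 'k::comm_ring_1) laurent"
  assumes inj: "inj (frag_extend E)" and compat: "\<And>p q. lc_form w' (E p) (E q) = w p q"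
  shows "laurent_map E (lc_bracket w P Q) = lc_bracket w' (laurent_map E P) (laurent_map E Q)"
proof -
  have form: "lc_form w' (frag_extend E al) (frag_extend E be) = lc_form w al be" for al be
    by (simp add: lc_form_frag_extend compat)
  have "laurent_map E (lc_bracket w P Q) = (\<Sum>al\<in>Poly_Mapping.keys P. \<Sum>be\<in>Poly_Mapping.keys Q.
      Poly_Mapping.single (frag_extend E al + frag_extend E be)
        (Poly_Mapping.lookup P al * Poly_Mapping.lookup Q be * lc_form w al be))"
    by (simp add: lc_bracket_eq_sum_superset[OF finite_keys subset_refl finite_keys subset_refl]
        laurent_map_sum frag_extend_add)
  also have "\<dots> = (\<Sum>al\<in>Poly_Mapping.keys P. \<Sum>be\<in>Poly_Mapping.keys Q.
      Poly_Mapping.single (frag_extend E al + frag_extend E be)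
        (Poly_Mapping.lookup (laurent_map E P) (frag_extend E al) * Poly_Mapping.lookup (laurent_map E Q) (frag_extend E be)
         * lc_form w' (frag_extend E al) (frag_extend E be)))"
    by (simp add: lookup_laurent_map_frag_extend[OF inj] form)
  also have "\<dots> = (\<Sum>al\<in>frag_extend E ` Poly_Mapping.keys P. \<Sum>be\<in>frag_extend E ` Poly_Mapping.keys Q.
      Poly_Mapping.single (al + be)
        (Poly_Mapping.lookup (laurent_map E P) al * Poly_Mapping.lookup (laurent_map E Q) be * lc_form w' al be))"
    using inj_on_subset[OF inj subset_UNIV] by (simp add: sum.reindex)
  also have "\<dots> = lc_bracket w' (laurent_map E P) (laurent_map E Q)"
    by (rule lc_bracket_eq_sum_superset[symmetric]) (auto simp: keys_laurent_map)
  finally show ?thesis .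
qed

lemma lc_bracket_single_laurent_map:
  fixes E :: "'v::finite \<Rightarrow> 'w::finite \<Rightarrow>\<^sub>0 int" and Q :: "('v, 'k::comm_ring_1) laurent"
  assumes "\<And>p. lc_form w \<gamma> (E p) = 0"
  shows "lc_bracket w (Poly_Mapping.single \<gamma> x) (laurent_map E Q) = 0"
proof -
  have "lc_bracket w (Poly_Mapping.single \<gamma> x) (laurent_map E Q) = (\<Sum>al\<in>{\<gamma>}. \<Sum>be\<in>frag_extend E ` Poly_Mapping.keys Q.
      Poly_Mapping.single (al + be)
        (Poly_Mapping.lookup (Poly_Mapping.single \<gamma> x) al * Poly_Mapping.lookup (laurent_map E Q) be * lc_form w al be))"
    by (rule lc_bracket_eq_sum_superset) (auto simp: keys_laurent_map)
  also have "\<dots> = 0"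
    by (auto simp: lc_form_frag_extend_right assms intro!: sum.neutral)
  finally show ?thesis .
qed

lemma alg_hom_zero: "alg_hom \<phi> \<Longrightarrow> \<phi> 0 = 0"
  unfolding alg_hom_def by (metis add_cancel_right_right add_0)

lemma alg_hom_sum: "alg_hom \<phi> \<Longrightarrow> \<phi> (sum F A) = (\<Sum>x\<in>A. \<phi> (F x))"
  by (induction A rule: infinite_finite_induct) (auto simp: alg_hom_zero, simp add: alg_hom_def)

lemma alg_hom_monomial:
  fixes \<phi> :: "('v, 'k::comm_ring_1) laurent \<Rightarrow> ('w, 'k) laurent"
  assumes hom: "alg_hom \<phi>" and gen: "\<And>x. \<phi> (gen x) = Poly_Mapping.single (E x) 1"
  shows "\<phi> (Poly_Mapping.single al 1) = Poly_Mapping.single (frag_extend E al) 1"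
proof -
  have mult: "\<phi> (P * Q) = \<phi> P * \<phi> Q" for P Q
    using hom by (simp add: alg_hom_def)
  have "Poly_Mapping.keys al \<subseteq> UNIV" by simp
  then show ?thesis
  proof (induction al rule: frag_induction)
    case zero
    then show ?case using hom by (simp add: alg_hom_def)
  next
    case (one x)
    then show ?case using gen by (simp add: gen_def)
  next
    case (diff al be)
    let ?unit = "\<lambda>\<gamma>. Poly_Mapping.single \<gamma> (1::'k)"
    have "\<phi> (?unit al) = \<phi> (?unit (al - be) * ?unit be)"
      by (simp add: mult_single)
    then have "?unit (frag_extend E al) = \<phi> (?unit (al - be)) * ?unit (frag_extend E be)"
      by (simp only: mult diff)
    then have "?unit (frag_extend E al) * ?unit (- frag_extend E be) = \<phi> (?unit (al - be))"
      by (simp add: mult_single mult.assoc)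
    then show ?case
      by (simp add: mult_single frag_extend_diff)
  qed
qed

lemma alg_hom_eq_laurent_map:
  fixes \<phi> :: "('v, 'k::comm_ring_1) laurent \<Rightarrow> ('w, 'k) laurent"
  assumes hom: "alg_hom \<phi>" and gen: "\<And>x. \<phi> (gen x) = Poly_Mapping.single (E x) 1"
  shows "\<phi> = laurent_map E"
proof
  fix P
  have "\<phi> (Poly_Mapping.single al x) = Poly_Mapping.single (frag_extend E al) x" for al x
  proof -
    have "\<phi> (const x * Poly_Mapping.single al 1) = const x * \<phi> (Poly_Mapping.single al 1)"
      using hom unfolding alg_hom_def by blast
    then show ?thesis
      by (simp add: alg_hom_monomial[OF hom gen] const_def mult_single)
  qed
  then show "\<phi> P = laurent_map E P"
    by (subst poly_mapping_expansion) (simp add: alg_hom_sum[OF hom] laurent_map_def)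
qed

fun expIV :: "varV \<Rightarrow> varIV \<Rightarrow>\<^sub>0 int" where
  "expIV aV = frag_of a + frag_of b + frag_of b"
| "expIV bV = frag_of b + frag_of f"
| "expIV cV = frag_of b + frag_of c"
| "expIV dV = frag_of b + frag_of d"

lemma imgV_eq_single_expIV: "imgV x = Poly_Mapping.single (expIV x) 1"
  by (cases x) (simp_all add: gen_def power2_eq_square mult_single add.assoc)

lemma inj_frag_extend_expIV: "inj (frag_extend expIV)"
proof (rule injI)
  fix \<alpha> \<beta> :: "varV \<Rightarrow>\<^sub>0 int"
  assume "frag_extend expIV \<alpha> = frag_extend expIV \<beta>"
  then have "Poly_Mapping.lookup (frag_extend expIV \<alpha>) v = Poly_Mapping.lookup (frag_extend expIV \<beta>) v" for v
    by simp
  from this[of a] this[of f] this[of c] this[of d] show "\<alpha> = \<beta>"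
    by (intro poly_mapping_eqI, case_tac k)
       (simp_all add: lookup_frag_extend[OF finite subset_UNIV] UNIV_varV lookup_add)
qed

text \<open>Characteristic zero is needed: in characteristic 2 the entries \<open>1/2\<close>, \<open>1/4\<close> of the
  brackets are \<open>0\<close>.\<close>
lemma lc_form_omegaIV_expIV: "lc_form omegaIV (expIV p) (expIV q) = (omegaV p q :: 'k::field_char_0)"
  by (cases p; cases q) (simp_all add: lc_form_def UNIV_varIV omegaIV_def omegaV_def lookup_add)

lemma lc_form_omegaIV_h_expIV: "lc_form omegaIV (frag_of h) (expIV p) = (0 :: 'k::field_char_0)"
  by (cases p) (simp_all add: lc_form_def UNIV_varIV omegaIV_def lookup_add)

theorem mainTheorem4:
  shows "(\<exists>\<phi> :: (varV, 'k::field_char_0) laurent \<Rightarrow> (varIV, 'k) laurent.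
            alg_hom \<phi> \<and> (\<forall>x. \<phi> (gen x) = imgV x))
       \<and> (\<forall>\<phi> :: (varV, 'k) laurent \<Rightarrow> (varIV, 'k) laurent.
            alg_hom \<phi> \<and> (\<forall>x. \<phi> (gen x) = imgV x) \<longrightarrow>
              inj \<phi>
            \<and> (\<forall>P Q. \<phi> (lc_bracket omegaV P Q) = lc_bracket omegaIV (\<phi> P) (\<phi> Q))
            \<and> (\<forall>P \<in> range \<phi>. lc_bracket omegaIV (gen h) P = 0))"
proof -
  let ?\<Phi> = "laurent_map expIV :: (varV, 'k) laurent \<Rightarrow> (varIV, 'k) laurent"
  have gen_img: "?\<Phi> (gen x) = imgV x" for x
    by (simp add: laurent_map_gen imgV_eq_single_expIV)
  have unique: "\<phi> = ?\<Phi>" if "alg_hom \<phi>" "\<forall>x. \<phi> (gen x) = imgV x" for \<phi>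
    using that by (intro alg_hom_eq_laurent_map) (simp_all add: imgV_eq_single_expIV)
  have "inj ?\<Phi>"
    by (rule inj_laurent_map[OF inj_frag_extend_expIV])
  moreover have "?\<Phi> (lc_bracket omegaV P Q) = lc_bracket omegaIV (?\<Phi> P) (?\<Phi> Q)" for P Q
    by (rule laurent_map_lc_bracket[OF inj_frag_extend_expIV lc_form_omegaIV_expIV])
  moreover have "lc_bracket omegaIV (gen h) (?\<Phi> P) = 0" for P
    unfolding gen_def by (rule lc_bracket_single_laurent_map[OF lc_form_omegaIV_h_expIV])
  ultimately show ?thesis
    using alg_hom_laurent_map gen_img unique by blast
qed

end
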